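(* For all sufficiently large $n$, with $\widetilde{h}$ defined as in the context, $\widetilde{h}(e^{it}) \in \overline{\mathbb{D}}$ for every $t \in [-\pi,\pi]$, where $\overline{\mathbb{D}} = \{z \in \mathbb{C}: |z|\le 1\}$.
   Context: Let $n$ be a positive integer, $a = n^{-2/5}$ and $r = a^{-1/2}$ (floor functions omitted, so $r$ is a positive integer). Let $r_* \in \{1,\dots,r\}$ be such that $\sum_{j=1}^{r_*} \frac{1}{\log^2(j+3)}-\sum_{j=r_*+1}^r \frac{1}{\log^2(j+3)} \in [20,21]$. Let $\epsilon_j = +1$ for $1 \le j \le r_*$ and $\epsilon_j = -1$ for $r_*+1 \le j \le r$. Let $\lambda_a>0$ be such that $\sum_{j=1}^r \frac{\lambda_a}{j^2\log^2(j+3)} = 1$ and set $d_j = \frac{\lambda_a}{j^2\log^2(j+3)}$. Define $\widetilde{h}(z) = \widetilde{\lambda}_a\sum_{j=1}^r \epsilon_j d_j z^j$, where $\widetilde{\lambda}_a>0$ is chosen so that $\widetilde{h}(1) = 1$. $\log$ is the natural logarithm. *)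

theory Defs
  imports Complex_Main
begin

text \<open>a = n^(-2/5), r = a^(-1/2) with the omitted floor made explicit.\<close>
definition a_of :: "nat \<Rightarrow> real" where
  "a_of n = real n powr (-2/5)"

definition r_of :: "nat \<Rightarrow> nat" where
  "r_of n = nat \<lfloor>a_of n powr (-1/2)\<rfloor>"

definition lam_a :: "nat \<Rightarrow> real" where
  "lam_a r = 1 / (\<Sum>j=1..r. 1 / (real j ^ 2 * ln (real j + 3) ^ 2))"

definition d_coef :: "nat \<Rightarrow> nat \<Rightarrow> real" where
  "d_coef r j = lam_a r / (real j ^ 2 * ln (real j + 3) ^ 2)"

definition eps :: "nat \<Rightarrow> nat \<Rightarrow> real" where
  "eps rs j = (if j \<le> rs then 1 else -1)"

definition balance :: "nat \<Rightarrow> nat \<Rightarrow> real" where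
  "balance r rs = (\<Sum>j=1..rs. 1 / ln (real j + 3) ^ 2) - (\<Sum>j=rs+1..r. 1 / ln (real j + 3) ^ 2)"

definition htilde :: "real \<Rightarrow> nat \<Rightarrow> nat \<Rightarrow> complex \<Rightarrow> complex" where
  "htilde lt rs r z = complex_of_real lt * (\<Sum>j=1..r. complex_of_real (eps rs j * d_coef r j) * z ^ j)"

end

theory Submission
  imports Defs "HOL-Analysis.Harmonic_Numbers" "HOL-Analysis.Complex_Transcendental"
    "HOL-Real_Asymp.Real_Asymp"
begin

text \<open>
  Up to the positive factor fixed by htilde 1 = 1, htilde is the polynomial
  G z = sum_j c_j z^j with c_j = eps_j w_j / j^2 and w_j = 1 / ln^2 (j + 3), so it suffices to
  show |G (e^it)| <= G 1 = S.

  Away from t = 0 the triangle inequality suffices: c_1 and c_2 are positive, |c_1 + c_2 e^it|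
  falls short of c_1 + c_2 by a fixed amount, and the negative coefficients (j > r_*) have total
  mass at most 1/r_*.

  Near t = 0 write G (e^it) = C + i D. Then |D| <= (39/16) |t| and S + C >= 22/25, so
  |G|^2 <= S^2 follows from the key estimate
  S - C = sum_j eps_j w_j (1 - cos jt) / j^2 >= 7 t^2. While r |t| <= 2 pi the kernel
  (1 - cos jt) / j^2 decreases in j, and summation by parts against the partial sums of eps_j w_j,
  which are at least the balance 20 from r_* on, gives the estimate. For larger |t| the first 2/|t|
  positive terms alone outweigh the whole negative tail, because r <= 3 r_*; the positivity of
  the balance forces this for large r since w_j decays only logarithmically.
\<close>

section \<open>Trigonometric estimates\<close>

lemma sin_ge_cubic:
  fixes x :: real
  assumes "0 \<le> x"
  shows "x - x ^ 3 / 6 \<le> sin x"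
proof -
  have "\<bar>sin x - (\<Sum>m<3. sin_coeff m * x ^ m)\<bar> \<le> inverse (fact 3) * \<bar>x\<bar> ^ 3"
    by (rule Maclaurin_sin_bound)
  moreover have "(\<Sum>m<3. sin_coeff m * x ^ m) = x"
    by (simp add: numeral_3_eq_3 sin_coeff_def)
  moreover have "fact 3 = (6::real)"
    by (simp add: numeral_3_eq_3)
  then have "inverse (fact 3) * \<bar>x\<bar> ^ 3 = x ^ 3 / 6"
    using assms by simp
  ultimately show ?thesis
    by linarith
qed

lemma one_minus_cos_le: "1 - cos (x::real) \<le> x\<^sup>2 / 2"
proof -
  have "(sin (x/2))\<^sup>2 \<le> (x/2)\<^sup>2"
    using abs_sin_x_le_abs_x[of "x/2"] by (metis abs_le_square_iff)
  then show ?thesis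
    using cos_double_sin[of "x/2"] by (simp add: power_divide)
qed

lemma one_minus_cos_ge:
  fixes x a :: real
  assumes "\<bar>x\<bar> \<le> a" "a \<le> 4"
  shows "(1 - a\<^sup>2 / 24)\<^sup>2 / 2 * x\<^sup>2 \<le> 1 - cos x"
proof -
  define z where "z = \<bar>x\<bar> / 2"
  have z0: "0 \<le> z"
    by (simp add: z_def)
  have "a\<^sup>2 \<le> 4\<^sup>2"
    using assms by (intro power_mono) auto
  then have c0: "0 \<le> 1 - a\<^sup>2 / 24"
    by simp
  have "z\<^sup>2 \<le> (a/2)\<^sup>2"
    using assms by (intro power_mono) (auto simp: z_def)
  then have "z * (1 - a\<^sup>2 / 24) \<le> z * (1 - z\<^sup>2 / 6)"
    using z0 by (intro mult_left_mono) (auto simp: power_divide)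
  also have "\<dots> = z - z ^ 3 / 6"
    by (simp add: power2_eq_square power3_eq_cube algebra_simps)
  also have "\<dots> \<le> sin z"
    using z0 by (rule sin_ge_cubic)
  finally have "(z * (1 - a\<^sup>2 / 24))\<^sup>2 \<le> (sin z)\<^sup>2"
    using z0 c0 by (intro power_mono) auto
  moreover have "1 - cos x = 2 * (sin z)\<^sup>2"
    using cos_double_sin[of z] by (simp add: z_def)
  moreover have "(1 - a\<^sup>2 / 24)\<^sup>2 / 2 * x\<^sup>2 = 2 * (z * (1 - a\<^sup>2 / 24))\<^sup>2"
    by (simp add: z_def power_mult_distrib power_divide)
  ultimately show ?thesis
    by linarith
qed

lemma sin_minus_mult_cos_nonneg:
  fixes x :: real
  assumes "0 \<le> x" "x \<le> pi"
  shows "0 \<le> sin x - x * cos x"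
proof -
  have "(\<lambda>v. sin v - v * cos v) 0 \<le> (\<lambda>v. sin v - v * cos v) x"
  proof (rule DERIV_nonneg_imp_nondecreasing[OF \<open>0 \<le> x\<close>])
    fix v
    assume v: "0 \<le> v" "v \<le> x"
    have "DERIV (\<lambda>v. sin v - v * cos v) v :> v * sin v"
      by (auto intro!: derivative_eq_intros simp: algebra_simps)
    moreover have "0 \<le> v * sin v"
      using v assms by (intro mult_nonneg_nonneg sin_ge_zero) auto
    ultimately show "\<exists>y. DERIV (\<lambda>v. sin v - v * cos v) v :> y \<and> 0 \<le> y"
      by blast
  qed
  then show ?thesis
    by simp
qed

lemma sin_div_antimono:
  fixes x y :: real
  assumes "0 < x" "x \<le> y" "y \<le> pi"
  shows "sin y / y \<le> sin x / x"
proof (rule DERIV_nonpos_imp_nonincreasing[OF \<open>x \<le> y\<close>])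
  fix v
  assume v: "x \<le> v" "v \<le> y"
  then have "0 < v"
    using assms by linarith
  then have "DERIV (\<lambda>v. sin v / v) v :> (cos v * v - sin v) / v\<^sup>2"
    by (auto intro!: derivative_eq_intros simp: power2_eq_square)
  moreover have "(cos v * v - sin v) / v\<^sup>2 \<le> 0"
    using sin_minus_mult_cos_nonneg[of v] \<open>0 < v\<close> v assms
    by (intro divide_nonpos_nonneg) (auto simp: algebra_simps)
  ultimately show "\<exists>d. DERIV (\<lambda>v. sin v / v) v :> d \<and> d \<le> 0"
    by blast
qed

definition cos_gap :: "real \<Rightarrow> nat \<Rightarrow> real" where
  "cos_gap t m = (1 - cos (real m * t)) / real m ^ 2"

lemma cos_gap_nonneg: "0 \<le> cos_gap t m"
  by (simp add: cos_gap_def)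

lemma cos_gap_le: "cos_gap t m \<le> 2 / real m ^ 2"
  unfolding cos_gap_def using cos_ge_minus_one[of "real m * t"]
  by (intro divide_right_mono) auto

lemma cos_gap_ge:
  assumes "1 \<le> m" "\<bar>real m * t\<bar> \<le> a" "a \<le> 4"
  shows "(1 - a\<^sup>2 / 24)\<^sup>2 / 2 * t\<^sup>2 \<le> cos_gap t m"
proof -
  have "(1 - a\<^sup>2 / 24)\<^sup>2 / 2 * (real m * t)\<^sup>2 / real m ^ 2 \<le> cos_gap t m"
    unfolding cos_gap_def using assms by (intro divide_right_mono one_minus_cos_ge) auto
  then show ?thesis
    using assms(1) by (simp add: power_mult_distrib)
qed

lemma cos_gap_eq_sinc:
  assumes "1 \<le> m" "t \<noteq> 0"
  shows "cos_gap t m = t\<^sup>2 / 2 * (sin (real m * \<bar>t\<bar> / 2) / (real m * \<bar>t\<bar> / 2))\<^sup>2"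
proof -
  have "cos (real m * \<bar>t\<bar>) = cos (real m * t)"
    using cos_abs_real[of "real m * t"] by (simp add: abs_mult)
  then have "1 - cos (real m * t) = 2 * (sin (real m * \<bar>t\<bar> / 2))\<^sup>2"
    using cos_double_sin[of "real m * \<bar>t\<bar> / 2"] by simp
  then show ?thesis
    using assms by (simp add: cos_gap_def power_divide power_mult_distrib field_simps)
qed

lemma cos_gap_antimono:
  assumes "1 \<le> m" "m \<le> n" "real n * \<bar>t\<bar> \<le> 2 * pi"
  shows "cos_gap t n \<le> cos_gap t m"
proof (cases "t = 0")
  case True
  then show ?thesis
    by (simp add: cos_gap_def)
next
  case False
  define x y where "x = real m * \<bar>t\<bar> / 2" and "y = real n * \<bar>t\<bar> / 2"
  have "0 < x" "x \<le> y" "y \<le> pi"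
    using assms False by (auto simp: x_def y_def intro!: mult_right_mono)
  then have "sin y / y \<le> sin x / x" "0 \<le> sin y / y"
    by (auto intro!: sin_div_antimono divide_nonneg_nonneg sin_ge_zero)
  then have "(sin y / y)\<^sup>2 \<le> (sin x / x)\<^sup>2"
    by (intro power_mono)
  then show ?thesis
    using assms False by (simp add: cos_gap_eq_sinc x_def y_def mult_left_mono)
qed

lemma cos_gap_sub_double:
  assumes "1 \<le> m"
  shows "cos_gap t m - cos_gap t (2 * m) = (1 - cos (real m * t))\<^sup>2 / (2 * real m ^ 2)"
proof -
  have double: "cos (real (2 * m) * t) = 2 * (cos (real m * t))\<^sup>2 - 1"
    using cos_double_cos[of "real m * t"] by (simp add: mult.assoc)
  show ?thesis
    using assms unfolding cos_gap_def double by (simp add: field_simps power2_eq_square)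
qed

lemma cos_gap_sub_double_ge:
  assumes "1 \<le> m" "1/6 \<le> \<bar>real m * t\<bar>" "\<bar>real m * t\<bar> \<le> 4"
  shows "t\<^sup>2 / 23328 \<le> cos_gap t m - cos_gap t (2 * m)"
proof -
  define x where "x = real m * t"
  have "x\<^sup>2 / 18 \<le> 1 - cos x"
    using one_minus_cos_ge[of x 4] assms by (simp add: x_def power2_eq_square)
  then have "(x\<^sup>2 / 18)\<^sup>2 \<le> (1 - cos x)\<^sup>2"
    by (intro power_mono) auto
  then have "(x\<^sup>2 / 18)\<^sup>2 / (2 * real m ^ 2) \<le> cos_gap t m - cos_gap t (2 * m)"
    using assms by (simp add: cos_gap_sub_double x_def divide_right_mono)
  moreover have "(x\<^sup>2 / 18)\<^sup>2 / (2 * real m ^ 2) = x\<^sup>2 * t\<^sup>2 / 648"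
    using assms by (simp add: x_def power_mult_distrib power2_eq_square field_simps)
  moreover have "(1/6)\<^sup>2 \<le> x\<^sup>2"
    using assms by (metis abs_le_square_iff abs_of_nonneg x_def zero_le_divide_1_iff zero_le_numeral)
  then have "t\<^sup>2 / 23328 \<le> x\<^sup>2 * t\<^sup>2 / 648"
    using mult_right_mono[of "(1/6)\<^sup>2" "x\<^sup>2" "t\<^sup>2"] by (simp add: power_divide)
  ultimately show ?thesis
    by linarith
qed

lemma cos_gap_ge_near_zero:
  assumes "1 \<le> m" "real m * \<bar>t\<bar> \<le> 1/2"
  shows "12/25 * t\<^sup>2 \<le> cos_gap t m"
proof -
  have "(1 - (1/2)\<^sup>2 / 24)\<^sup>2 / 2 * t\<^sup>2 \<le> cos_gap t m"
    using assms by (intro cos_gap_ge) (auto simp: abs_mult)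
  moreover have "12/25 * t\<^sup>2 \<le> (1 - (1/2)\<^sup>2 / 24)\<^sup>2 / 2 * t\<^sup>2"
    by (intro mult_right_mono) (auto simp: power2_eq_square)
  ultimately show ?thesis
    by linarith
qed

lemma cos_gap_half_drop_ge:
  assumes "1 \<le> k" "2 * k \<le> n" "n \<le> 3 * k" "1/2 < real n * \<bar>t\<bar>" "real n * \<bar>t\<bar> \<le> 2 * pi"
  shows "t\<^sup>2 / 23328 \<le> cos_gap t k - cos_gap t n"
proof -
  have "real (2 * k) * \<bar>t\<bar> \<le> real n * \<bar>t\<bar>"
    using assms(2) by (intro mult_right_mono) auto
  then have "cos_gap t n \<le> cos_gap t (2 * k)"
    using assms(1,2,5) by (intro cos_gap_antimono) auto
  have "real n * \<bar>t\<bar> \<le> 3 * (real k * \<bar>t\<bar>)"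
    using assms(3) mult_right_mono[of "real n" "3 * real k" "\<bar>t\<bar>"] by simp
  moreover have "2 * (real k * \<bar>t\<bar>) \<le> 2 * pi"
    using assms(5) \<open>real (2 * k) * \<bar>t\<bar> \<le> real n * \<bar>t\<bar>\<close> by simp
  ultimately have "t\<^sup>2 / 23328 \<le> cos_gap t k - cos_gap t (2 * k)"
    using assms(1,4) pi_less_4 by (intro cos_gap_sub_double_ge) (auto simp: abs_mult)
  then show ?thesis
    using \<open>cos_gap t n \<le> cos_gap t (2 * k)\<close> by linarith
qed

lemma cos_gap_sum_ge:
  assumes "t \<noteq> 0"
  shows "25/36 * \<bar>t\<bar> - 25/72 * t\<^sup>2 \<le> (\<Sum>j=1..nat \<lfloor>2 / \<bar>t\<bar>\<rfloor>. cos_gap t j)"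
proof -
  define J where "J = nat \<lfloor>2 / \<bar>t\<bar>\<rfloor>"
  have J: "real J \<le> 2 / \<bar>t\<bar>" "2 / \<bar>t\<bar> - 1 \<le> real J"
    using assms by (auto simp: J_def of_nat_nat)
  have "(\<Sum>j=1..J. 25/72 * t\<^sup>2) \<le> (\<Sum>j=1..J. cos_gap t j)"
  proof (intro sum_mono)
    fix j
    assume j: "j \<in> {1..J}"
    have "real j * \<bar>t\<bar> \<le> real J * \<bar>t\<bar>"
      using j by (intro mult_right_mono) auto
    also have "\<dots> \<le> 2"
      using J(1) assms by (simp add: field_simps)
    finally have "(1 - 2\<^sup>2 / 24)\<^sup>2 / 2 * t\<^sup>2 \<le> cos_gap t j"
      using j by (intro cos_gap_ge) (auto simp: abs_mult)
    then show "25/72 * t\<^sup>2 \<le> cos_gap t j"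
      by (simp add: power2_eq_square)
  qed
  then have "real J * (25/72 * t\<^sup>2) \<le> (\<Sum>j=1..J. cos_gap t j)"
    by simp
  have "25/36 * \<bar>t\<bar> - 25/72 * t\<^sup>2 = (2 / \<bar>t\<bar> - 1) * (25/72 * t\<^sup>2)"
    using assms by (simp add: field_simps power2_eq_square)
  also have "\<dots> \<le> real J * (25/72 * t\<^sup>2)"
    using J(2) by (intro mult_right_mono) auto
  also have "\<dots> \<le> (\<Sum>j=1..J. cos_gap t j)"
    by fact
  finally show ?thesis
    by (simp add: J_def)
qed

section \<open>The logarithmic weights\<close>

lemma ln_4_ge: "4/3 \<le> ln (4::real)"
  using ln2_ge_two_thirds ln_mult[of 2 2] by simp

lemma ln_4_le: "ln (4::real) \<le> 3/2"
proof -
  have "65/32 \<le> exp (3/4::real)"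
    using exp_lower_Taylor_quadratic[of "3/4"] by (simp add: power2_eq_square)
  then have "(65/32) * (65/32) \<le> exp (3/4::real) * exp (3/4)"
    by (intro mult_mono) auto
  then have "4 \<le> exp (3/2::real)"
    by (simp flip: exp_add)
  then show ?thesis
    by (metis exp_gt_zero ln_le_cancel_iff zero_less_numeral ln_exp)
qed

lemma ln_5_le: "ln (5::real) \<le> 2"
proof -
  have "5 \<le> exp (2::real)"
    using exp_lower_Taylor_quadratic[of 2] by simp
  then show ?thesis
    by (metis exp_gt_zero ln_exp ln_le_cancel_iff zero_less_numeral)
qed

definition weight :: "nat \<Rightarrow> real" where
  "weight j = 1 / ln (real j + 3) ^ 2"

lemma weight_pos: "0 < weight j"
  by (simp add: weight_def)

lemma weight_antimono:
  assumes "i \<le> j"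
  shows "weight j \<le> weight i"
  unfolding weight_def using assms
  by (intro divide_left_mono power_mono mult_pos_pos) auto

lemma weight_le:
  assumes "1 \<le> j"
  shows "weight j \<le> 9/16"
proof -
  have "ln 4 \<le> ln (real j + 3)"
    using assms by simp
  then have "4/3 \<le> ln (real j + 3)"
    using ln_4_ge by linarith
  then have "(4/3)\<^sup>2 \<le> ln (real j + 3) ^ 2"
    by (intro power_mono) auto
  then show ?thesis
    by (simp add: weight_def field_simps power2_eq_square)
qed

lemma weight_1_ge: "4/9 \<le> weight 1"
proof -
  have "ln (4::real) ^ 2 \<le> (3/2)\<^sup>2"
    using ln_4_le ln_4_ge by (intro power_mono) auto
  then show ?thesis
    using ln_4_ge by (simp add: weight_def field_simps power2_eq_square)
qed

lemma weight_2_ge: "1/4 \<le> weight 2"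
proof -
  have "ln (5::real) ^ 2 \<le> 2\<^sup>2"
    using ln_5_le by (intro power_mono) auto
  then show ?thesis
    by (simp add: weight_def field_simps)
qed

lemma weight_div_le_telescoping:
  assumes "2 \<le> j"
  shows "weight j / real j \<le> 5/2 * (1 / ln (real j + 2) - 1 / ln (real j + 3))"
proof -
  define x where "x = real j + 3"
  have x5: "5 \<le> x"
    using assms by (simp add: x_def)
  have ln_pos: "0 < ln (x - 1)"
    using x5 by simp
  have ln_le: "ln (x - 1) \<le> ln x"
    using x5 by simp
  have "ln ((x - 1) / x) \<le> (x - 1) / x - 1"
    using x5 by (intro ln_le_minus_one) auto
  then have gap: "1 / x \<le> ln x - ln (x - 1)"
    using x5 by (simp add: ln_div field_simps)
  have "weight j / real j \<le> 5/2 * (weight j / x)"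
    using assms weight_pos[of j] by (simp add: x_def field_simps)
  also have "weight j / x = (1 / x) / (ln x * ln x)"
    by (simp add: weight_def x_def power2_eq_square)
  also have "\<dots> \<le> (ln x - ln (x - 1)) / (ln (x - 1) * ln x)"
    using gap ln_pos ln_le by (intro frac_le mult_mono) auto
  also have "\<dots> = 1 / ln (x - 1) - 1 / ln x"
    using ln_pos ln_le by (simp add: field_simps)
  finally show ?thesis
    by (simp add: x_def add.commute[of 2])
qed

lemma weight_div_sum_le: "(\<Sum>j=1..r. weight j / real j) \<le> 39/16"
proof (cases "r = 0")
  case False
  define g where "g k = 1 / ln (real k + 3)" for k :: nat
  have "(\<Sum>j=2..r. weight j / real j) \<le> (\<Sum>j=2..r. 5/2 * (g (j - 1) - g j))"
  proof (intro sum_mono)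
    fix j
    assume j: "j \<in> {2..r}"
    then have "real (j - 1) + 3 = real j + 2"
      by (simp add: of_nat_diff)
    then show "weight j / real j \<le> 5/2 * (g (j - 1) - g j)"
      unfolding g_def using weight_div_le_telescoping[of j] j by (simp add: add.commute)
  qed
  also have "\<dots> = 5/2 * (g 1 - g r)"
  proof -
    have "(\<Sum>j=2..r. g (j - 1) - g j) = g 1 - g r"
      using False sum_telescope''[of 1 r "\<lambda>k. - g k"] by (simp add: eval_nat_numeral)
    then show ?thesis
      by (simp only: sum_distrib_left[symmetric])
  qed
  also have "\<dots> \<le> 15/8"
  proof -
    have "g 1 \<le> 3/4" "0 \<le> g r"
      using ln_4_ge by (simp_all add: g_def field_simps)
    then have "5/2 * (g 1 - g r) \<le> 5/2 * (3/4)"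
      by (intro mult_left_mono) auto
    then show ?thesis
      by simp
  qed
  finally have "(\<Sum>j=2..r. weight j / real j) \<le> 15/8" .
  moreover have "(\<Sum>j=1..r. weight j / real j) = weight 1 + (\<Sum>j=2..r. weight j / real j)"
    using False by (simp add: sum.atLeast_Suc_atMost numeral_2_eq_2)
  ultimately show ?thesis
    using weight_le[of 1] by simp
qed simp

lemma inverse_square_sum_le:
  assumes "1 \<le> a" "a \<le> b"
  shows "(\<Sum>k=a+1..b. 1 / real k ^ 2) \<le> 1 / real a - 1 / real b"
proof -
  have "(\<Sum>k=Suc a..b. 1 / real k ^ 2) \<le> (\<Sum>k=Suc a..b. - (1 / real k) - - (1 / real (k - 1)))"
  proof (intro sum_mono)
    fix k
    assume "k \<in> {Suc a..b}"
    then have "2 \<le> real k"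
      using assms by auto
    then show "1 / real k ^ 2 \<le> - (1 / real k) - - (1 / real (k - 1))"
      by (simp add: of_nat_diff field_simps power2_eq_square)
  qed
  also have "\<dots> = 1 / real a - 1 / real b"
    using sum_telescope''[OF assms(2), of "\<lambda>k. - (1 / real k)"] by simp
  finally show ?thesis
    by simp
qed

lemma weight_tail_le:
  assumes "1 \<le> rs" "rs \<le> r"
  shows "(\<Sum>j=rs+1..r. weight j / real j ^ 2) \<le> 1 / real rs"
proof -
  have "(\<Sum>j=rs+1..r. weight j / real j ^ 2) \<le> (\<Sum>j=rs+1..r. 1 / real j ^ 2)"
    by (intro sum_mono divide_right_mono) (auto intro!: order_trans[OF weight_le])
  also have "\<dots> \<le> 1 / real rs - 1 / real r"
    using assms by (rule inverse_square_sum_le)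
  also have "\<dots> \<le> 1 / real rs"
    by simp
  finally show ?thesis .
qed

lemma ln_square_le_sqrt:
  fixes y :: real
  assumes "1 \<le> y"
  shows "ln y ^ 2 \<le> 16 * sqrt y"
proof -
  define s where "s = sqrt (sqrt y)"
  have s1: "1 \<le> s"
    using assms by (simp add: s_def)
  have "s ^ 4 = (sqrt (sqrt y) ^ 2) ^ 2"
    by (simp add: s_def flip: power_mult)
  then have "y = s ^ 4"
    using assms by simp
  then have "ln y = 4 * ln s"
    using s1 by (simp add: ln_realpow)
  moreover have "ln s \<le> s - 1" "0 \<le> ln s"
    using s1 by (auto intro!: ln_le_minus_one)
  ultimately have "ln y ^ 2 \<le> (4 * s)\<^sup>2"
    by (intro power_mono) auto
  also have "\<dots> = 16 * sqrt y"
    using assms by (simp add: s_def power_mult_distrib)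
  finally show ?thesis .
qed

lemma weight_ge_of_index_le:
  assumes "0 < u" "u \<le> 1/10^8" "real J \<le> 2 / u"
  shows "140 * u \<le> weight J"
proof -
  define y where "y = 2 / u + 3"
  have "ln (real J + 3) ^ 2 \<le> ln y ^ 2"
    using assms by (intro power_mono) (auto simp: y_def)
  also have "\<dots> \<le> 16 * sqrt y"
    using assms by (intro ln_square_le_sqrt) (simp add: y_def)
  finally have ln_le: "ln (real J + 3) ^ 2 \<le> 16 * sqrt y" .
  have "u\<^sup>2 \<le> u"
    using assms by (simp add: power2_eq_square mult_left_le)
  moreover have "u \<le> 1/100000000"
    using assms by simp
  ultimately have "10035200 * u + 15052800 * u\<^sup>2 \<le> 1"
    by linarith
  moreover have "(2240 * u)\<^sup>2 * y = 10035200 * u + 15052800 * u\<^sup>2"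
    using assms by (simp add: y_def power2_eq_square field_simps)
  ultimately have "(2240 * u)\<^sup>2 * y \<le> 1"
    by simp
  then have "2240 * u * sqrt y \<le> 1"
    using assms by (metis real_sqrt_le_1_iff real_sqrt_mult real_sqrt_abs abs_of_nonneg
        less_imp_le mult_nonneg_nonneg zero_le_numeral)
  have "140 * u * ln (real J + 3) ^ 2 \<le> 140 * u * (16 * sqrt y)"
    using ln_le assms(1) by (intro mult_left_mono) auto
  also have "\<dots> = 2240 * u * sqrt y"
    by simp
  finally have "140 * u * ln (real J + 3) ^ 2 \<le> 1"
    using \<open>2240 * u * sqrt y \<le> 1\<close> by linarith
  then show ?thesis
    by (simp add: weight_def field_simps)
qed

section \<open>Summation by parts\<close>

lemma sum_by_parts:
  fixes a h :: "nat \<Rightarrow> 'a::comm_ring"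
  shows "(\<Sum>j=1..r. a j * h j) =
    (\<Sum>m=1..r. (\<Sum>j=1..m. a j) * (h m - h (Suc m))) + (\<Sum>j=1..r. a j) * h (Suc r)"
  by (induction r) (simp_all add: algebra_simps)

lemma sum_mult_ge_by_parts:
  fixes a h L :: "nat \<Rightarrow> real"
  assumes "\<And>m. 1 \<le> m \<Longrightarrow> m \<le> r \<Longrightarrow> h (Suc m) \<le> h m" "0 \<le> h (Suc r)"
    and "\<And>m. 1 \<le> m \<Longrightarrow> m \<le> r \<Longrightarrow> L m \<le> (\<Sum>j=1..m. a j)" "1 \<le> r"
  shows "(\<Sum>m=1..r. L m * (h m - h (Suc m))) + L r * h (Suc r) \<le> (\<Sum>j=1..r. a j * h j)"
  unfolding sum_by_parts[of a h r] using assms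
  by (intro add_mono sum_mono mult_right_mono) auto

lemma sum_mult_ge_two_levels:
  fixes a h :: "nat \<Rightarrow> real"
  assumes "\<And>m. 1 \<le> m \<Longrightarrow> m \<le> r \<Longrightarrow> h (Suc m) \<le> h m" "0 \<le> h (Suc r)"
    and k: "1 \<le> k" "k \<le> s" "s \<le> r"
    and "\<And>m. 1 \<le> m \<Longrightarrow> m < k \<Longrightarrow> 0 \<le> (\<Sum>j=1..m. a j)"
    and "\<And>m. k \<le> m \<Longrightarrow> m < s \<Longrightarrow> A \<le> (\<Sum>j=1..m. a j)"
    and "\<And>m. s \<le> m \<Longrightarrow> m \<le> r \<Longrightarrow> B \<le> (\<Sum>j=1..m. a j)"
  shows "A * (h k - h s) + B * h s \<le> (\<Sum>j=1..r. a j * h j)"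
proof -
  define L where "L m = (if m < k then 0 else if m < s then A else B)" for m
  define d where "d m = h m - h (Suc m)" for m
  have "(\<Sum>m=1..r. L m * d m) + L r * h (Suc r) \<le> (\<Sum>j=1..r. a j * h j)"
    unfolding d_def using assms by (intro sum_mult_ge_by_parts) (auto simp: L_def)
  moreover have "(\<Sum>m=1..r. L m * d m) =
      (\<Sum>m=1..<k. L m * d m) + (\<Sum>m=k..<s. L m * d m) + (\<Sum>m=s..<Suc r. L m * d m)"
    using k by (simp add: atLeastLessThanSuc_atLeastAtMost[symmetric] sum.atLeastLessThan_concat)
  moreover have "(\<Sum>m=1..<k. L m * d m) = 0"
    by (simp add: L_def)
  moreover have "(\<Sum>m=k..<s. L m * d m) = A * (h k - h s)"
    using k sum_Suc_diff'[of k s "\<lambda>m. - h m"] by (simp add: L_def d_def flip: sum_distrib_left)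
  moreover have "(\<Sum>m=s..<Suc r. L m * d m) = B * (h s - h (Suc r))"
    using k sum_Suc_diff'[of s "Suc r" "\<lambda>m. - h m"] by (simp add: L_def d_def flip: sum_distrib_left)
  moreover have "L r = B"
    using k by (simp add: L_def)
  ultimately show ?thesis
    by (simp add: algebra_simps)
qed

section \<open>The cosine defect near zero\<close>

definition coef :: "nat \<Rightarrow> nat \<Rightarrow> real" where
  "coef rs j = eps rs j * weight j / real j ^ 2"

lemma sum_eps_mult:
  assumes "rs \<le> r"
  shows "(\<Sum>j=1..r. eps rs j * f j) = (\<Sum>j=1..rs. f j) - (\<Sum>j=rs+1..r. f j)"
proof -
  have "(\<Sum>j=1..r. eps rs j * f j) = (\<Sum>j=1..rs. eps rs j * f j) + (\<Sum>j=rs+1..r. eps rs j * f j)"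
    using assms sum.ub_add_nat[of 1 rs "\<lambda>j. eps rs j * f j" "r - rs"] by simp
  then show ?thesis
    by (simp add: eps_def sum_negf)
qed

lemma sum_eps_weight_eq:
  assumes "m \<le> rs"
  shows "(\<Sum>j=1..m. eps rs j * weight j) = (\<Sum>j=1..m. weight j)"
  using assms by (intro sum.cong) (auto simp: eps_def)

lemma balance_eq_weight: "balance r rs = (\<Sum>j=1..rs. weight j) - (\<Sum>j=rs+1..r. weight j)"
  by (simp add: balance_def weight_def)

lemma balance_le_sum_eps_weight:
  assumes "rs \<le> m" "m \<le> r"
  shows "balance r rs \<le> (\<Sum>j=1..m. eps rs j * weight j)"
proof -
  have "(\<Sum>j=rs+1..m. weight j) \<le> (\<Sum>j=rs+1..r. weight j)"
    using assms weight_pos by (intro sum_mono2) (auto intro: less_imp_le)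
  moreover have "(\<Sum>j=1..m. eps rs j * weight j) = (\<Sum>j=1..rs. weight j) - (\<Sum>j=rs+1..m. weight j)"
    using assms(1) by (rule sum_eps_mult)
  ultimately show ?thesis
    unfolding balance_eq_weight by linarith
qed

lemma sum_coef_one_minus_cos:
  "(\<Sum>j=1..r. coef rs j * (1 - cos (real j * t))) = (\<Sum>j=1..r. eps rs j * weight j * cos_gap t j)"
  by (intro sum.cong) (auto simp: coef_def cos_gap_def)

lemma eps_weight_cos_gap_ge_by_parts:
  assumes "1 \<le> k" "k \<le> rs" "rs \<le> r" "real (Suc r) * \<bar>t\<bar> \<le> 2 * pi"
  shows "real k * weight rs * (cos_gap t k - cos_gap t rs) + balance r rs * cos_gap t rs
    \<le> (\<Sum>j=1..r. eps rs j * weight j * cos_gap t j)"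
proof (rule sum_mult_ge_two_levels)
  fix m
  assume "1 \<le> m" "m \<le> r"
  moreover have "real (Suc m) * \<bar>t\<bar> \<le> real (Suc r) * \<bar>t\<bar>"
    using \<open>m \<le> r\<close> by (intro mult_right_mono) auto
  ultimately show "cos_gap t (Suc m) \<le> cos_gap t m"
    using assms by (intro cos_gap_antimono) auto
next
  fix m
  assume "m < k"
  then show "0 \<le> (\<Sum>j=1..m. eps rs j * weight j)"
    using assms sum_eps_weight_eq[of m rs] weight_pos by (simp add: less_imp_le sum_nonneg)
next
  fix m
  assume "k \<le> m" "m < rs"
  then have "real k * weight rs \<le> real m * weight m"
    using weight_pos[of rs] by (intro mult_mono weight_antimono) auto
  also have "\<dots> \<le> (\<Sum>j=1..m. weight j)"
    using sum_mono[of "{1..m}" "\<lambda>_. weight m" weight] weight_antimono by simp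
  finally show "real k * weight rs \<le> (\<Sum>j=1..m. eps rs j * weight j)"
    using \<open>m < rs\<close> sum_eps_weight_eq[of m rs] by simp
next
  fix m
  assume "rs \<le> m" "m \<le> r"
  then show "balance r rs \<le> (\<Sum>j=1..m. eps rs j * weight j)"
    by (rule balance_le_sum_eps_weight)
qed (use assms in \<open>auto simp: cos_gap_nonneg\<close>)

lemma eps_weight_cos_gap_ge_within_period:
  assumes "3 \<le> rs" "rs \<le> r" "20 \<le> balance r rs" "10^6 \<le> real rs * weight rs"
    and "real (Suc r) * \<bar>t\<bar> \<le> 2 * pi"
  shows "7 * t\<^sup>2 \<le> (\<Sum>j=1..r. eps rs j * weight j * cos_gap t j)"
proof -
  define k where "k = rs div 2"
  have k: "1 \<le> k" "2 * k \<le> rs" "rs \<le> 3 * k"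
    using assms(1) by (auto simp: k_def)
  have rs_t: "real rs * \<bar>t\<bar> \<le> 2 * pi"
    using assms(2,5) mult_right_mono[of "real rs" "real (Suc r)" "\<bar>t\<bar>"] by simp
  have by_parts: "real k * weight rs * (cos_gap t k - cos_gap t rs) + balance r rs * cos_gap t rs
      \<le> (\<Sum>j=1..r. eps rs j * weight j * cos_gap t j)"
    using k assms by (intro eps_weight_cos_gap_ge_by_parts) auto
  have "cos_gap t rs \<le> cos_gap t k"
    using k rs_t by (intro cos_gap_antimono) auto
  then have first_nonneg: "0 \<le> real k * weight rs * (cos_gap t k - cos_gap t rs)"
    using weight_pos[of rs] by simp
  have second_nonneg: "0 \<le> balance r rs * cos_gap t rs"
    using assms(3) cos_gap_nonneg by simp
  show ?thesis
  proof (cases "real rs * \<bar>t\<bar> \<le> 1/2")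
    case True
    then have "20 * (12/25 * t\<^sup>2) \<le> balance r rs * cos_gap t rs"
      using assms(1,3) cos_gap_ge_near_zero[of rs t] by (intro mult_mono) auto
    then show ?thesis
      using by_parts first_nonneg zero_le_power2[of t] by linarith
  next
    case False
    then have "t\<^sup>2 / 23328 \<le> cos_gap t k - cos_gap t rs"
      using k rs_t by (intro cos_gap_half_drop_ge) auto
    moreover have "10^6 / 3 \<le> real k * weight rs"
    proof -
      have "real rs * weight rs \<le> 3 * real k * weight rs"
        using k weight_pos[of rs] by (intro mult_right_mono) auto
      then show ?thesis
        using assms(4) by linarith
    qed
    ultimately have "10^6 / 3 * (t\<^sup>2 / 23328) \<le> real k * weight rs * (cos_gap t k - cos_gap t rs)"
      by (intro mult_mono) auto
    moreover have "7 * t\<^sup>2 \<le> 10^6 / 3 * (t\<^sup>2 / 23328)"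
      by simp
    ultimately show ?thesis
      using by_parts second_nonneg by linarith
  qed
qed

lemma weight_cos_gap_head_ge:
  assumes "J \<le> rs"
  shows "weight J * (\<Sum>j=1..J. cos_gap t j) \<le> (\<Sum>j=1..rs. weight j * cos_gap t j)"
proof -
  have "weight J * (\<Sum>j=1..J. cos_gap t j) \<le> (\<Sum>j=1..J. weight j * cos_gap t j)"
    unfolding sum_distrib_left
    by (intro sum_mono mult_right_mono weight_antimono) (auto simp: cos_gap_nonneg)
  also have "\<dots> \<le> (\<Sum>j=1..rs. weight j * cos_gap t j)"
    using assms weight_pos by (intro sum_mono2) (auto intro: mult_nonneg_nonneg less_imp_le cos_gap_nonneg)
  finally show ?thesis .
qed

lemma weight_cos_gap_tail_le:
  assumes "J \<le> rs" "1 \<le> rs" "rs \<le> r"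
  shows "(\<Sum>j=rs+1..r. weight j * cos_gap t j) \<le> weight J * (2 / real rs - 2 / real r)"
proof -
  have "(\<Sum>j=rs+1..r. weight j * cos_gap t j) \<le> (\<Sum>j=rs+1..r. weight J * (2 * (1 / real j ^ 2)))"
    using assms weight_pos cos_gap_le
    by (intro sum_mono mult_mono weight_antimono) (auto intro: less_imp_le simp: cos_gap_nonneg)
  also have "\<dots> = 2 * weight J * (\<Sum>j=rs+1..r. 1 / real j ^ 2)"
    by (simp add: sum_distrib_left mult_ac)
  also have "\<dots> \<le> 2 * weight J * (1 / real rs - 1 / real r)"
    using assms weight_pos[of J] by (intro mult_left_mono inverse_square_sum_le) auto
  finally show ?thesis
    by (simp add: algebra_simps)
qed

lemma beyond_period_estimates:
  assumes "1 \<le> rs" "rs \<le> r" "r \<le> 3 * rs" "100 \<le> r" "2 * pi \<le> real (Suc r) * \<bar>t\<bar>"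
  shows "0 < \<bar>t\<bar>" "nat \<lfloor>2 / \<bar>t\<bar>\<rfloor> \<le> rs" "2 / real rs - 2 / real r \<le> 644/1000 * \<bar>t\<bar>"
proof -
  have r: "real r \<le> 3 * real rs" "100 \<le> real r"
    using assms(3,4) by simp_all
  have "\<bar>t\<bar> / (2 * pi) \<le> \<bar>t\<bar> / (2 * (157/50))"
    using pi_approx(1) by (intro divide_left_mono) auto
  moreover have "1 / real (Suc r) \<le> \<bar>t\<bar> / (2 * pi)"
    using assms(5) pi_gt_zero by (simp add: field_simps)
  ultimately have inv_r: "1 / real (Suc r) \<le> 25/157 * \<bar>t\<bar>"
    by simp
  moreover have "0 < 1 / real (Suc r)"
    by simp
  ultimately show "0 < \<bar>t\<bar>"
    by linarith
  then have "real (nat \<lfloor>2 / \<bar>t\<bar>\<rfloor>) \<le> 2 / \<bar>t\<bar>"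
    by (simp add: of_nat_nat)
  also have "\<dots> \<le> 50/157 * real (Suc r)"
    using inv_r \<open>0 < \<bar>t\<bar>\<close> by (simp add: field_simps)
  also have "\<dots> \<le> real rs"
    using r by simp
  finally show "nat \<lfloor>2 / \<bar>t\<bar>\<rfloor> \<le> rs"
    by simp
  have "2 / real rs \<le> 6 / real r"
    using assms(1) r by (simp add: field_simps)
  then have "2 / real rs - 2 / real r \<le> 4 / real r"
    by simp
  also have "\<dots> \<le> 404/100 * (1 / real (Suc r))"
    using r by (simp add: field_simps)
  also have "\<dots> \<le> 404/100 * (25/157 * \<bar>t\<bar>)"
    using inv_r by (intro mult_left_mono) auto
  finally show "2 / real rs - 2 / real r \<le> 644/1000 * \<bar>t\<bar>"
    by simp
qed

lemma eps_weight_cos_gap_ge_beyond_period: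
  assumes "1 \<le> rs" "rs \<le> r" "r \<le> 3 * rs" "100 \<le> r"
    and "2 * pi \<le> real (Suc r) * \<bar>t\<bar>" "\<bar>t\<bar> \<le> 1/10^8"
  shows "7 * t\<^sup>2 \<le> (\<Sum>j=1..r. eps rs j * weight j * cos_gap t j)"
proof -
  define u where "u = \<bar>t\<bar>"
  define J where "J = nat \<lfloor>2 / u\<rfloor>"
  have u: "0 < u" "u \<le> 1/10^8" and J: "J \<le> rs"
    and tail_factor: "2 / real rs - 2 / real r \<le> 644/1000 * u"
    using beyond_period_estimates[OF assms(1-5)] assms(6) by (simp_all add: u_def J_def)
  have head: "weight J * (25/36 * u - 25/72 * u\<^sup>2) \<le> (\<Sum>j=1..rs. weight j * cos_gap t j)"
    using weight_cos_gap_head_ge[OF J, of t] cos_gap_sum_ge[of t] u weight_pos[of J]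
    by (auto simp: u_def J_def intro: order_trans[OF mult_left_mono])
  have "weight J * (2 / real rs - 2 / real r) \<le> weight J * (644/1000 * u)"
    using tail_factor weight_pos[of J] by (intro mult_left_mono) auto
  then have tail: "(\<Sum>j=rs+1..r. weight j * cos_gap t j) \<le> weight J * (644/1000 * u)"
    using weight_cos_gap_tail_le[OF J assms(1,2), of t] by linarith
  have margin: "7 * u\<^sup>2 \<le> weight J * (25/36 * u - 25/72 * u\<^sup>2) - weight J * (644/1000 * u)"
  proof -
    have "u\<^sup>2 \<le> u * (1/1000)"
      unfolding power2_eq_square using u by (intro mult_left_mono) auto
    then have "u / 20 \<le> 25/36 * u - 25/72 * u\<^sup>2 - 644/1000 * u"
      using u by linarith
    moreover have "140 * u \<le> weight J"
      using u by (intro weight_ge_of_index_le) (auto simp: J_def of_nat_nat)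
    ultimately have "140 * u * (u / 20) \<le> weight J * (25/36 * u - 25/72 * u\<^sup>2 - 644/1000 * u)"
      using u by (intro mult_mono) auto
    moreover have "140 * u * (u / 20) = 7 * u\<^sup>2"
      by (simp add: power2_eq_square)
    ultimately show ?thesis
      by (simp only: right_diff_distrib)
  qed
  have "(\<Sum>j=1..r. eps rs j * weight j * cos_gap t j) =
      (\<Sum>j=1..rs. weight j * cos_gap t j) - (\<Sum>j=rs+1..r. weight j * cos_gap t j)"
    using sum_eps_mult[OF assms(2), of "\<lambda>j. weight j * cos_gap t j"] by (simp add: mult.assoc)
  then show ?thesis
    using order_trans[OF margin diff_mono[OF head tail]] by (simp only: u_def power2_abs)
qed

section \<open>The polynomial on the unit circle\<close>

lemma htilde_eq:
  "htilde lt rs r z = complex_of_real (lt * lam_a r) * (\<Sum>j=1..r. complex_of_real (coef rs j) * z ^ j)"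
proof -
  have "(\<Sum>j=1..r. complex_of_real (eps rs j * d_coef r j) * z ^ j) =
      complex_of_real (lam_a r) * (\<Sum>j=1..r. complex_of_real (coef rs j) * z ^ j)"
    unfolding sum_distrib_left
  proof (intro sum.cong refl)
    fix j
    have "eps rs j * d_coef r j = lam_a r * coef rs j"
      by (simp add: coef_def d_coef_def weight_def mult_ac)
    then show "complex_of_real (eps rs j * d_coef r j) * z ^ j =
        complex_of_real (lam_a r) * (complex_of_real (coef rs j) * z ^ j)"
      by (simp add: mult.assoc)
  qed
  then show ?thesis
    by (simp add: htilde_def mult.assoc)
qed

lemma norm_htilde_le_one:
  assumes "0 < lt" "htilde lt rs r 1 = 1"
    and "cmod (\<Sum>j=1..r. complex_of_real (coef rs j) * z ^ j) \<le> (\<Sum>j=1..r. coef rs j)"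
  shows "cmod (htilde lt rs r z) \<le> 1"
proof -
  have "htilde lt rs r 1 = complex_of_real (lt * lam_a r * (\<Sum>j=1..r. coef rs j))"
    by (simp add: htilde_eq of_real_sum)
  then have scale: "lt * lam_a r * (\<Sum>j=1..r. coef rs j) = 1"
    using assms(2) by (metis of_real_eq_1_iff)
  have "0 \<le> lam_a r"
    by (simp add: lam_a_def sum_nonneg)
  then have "cmod (htilde lt rs r z) = lt * lam_a r * cmod (\<Sum>j=1..r. complex_of_real (coef rs j) * z ^ j)"
    using assms(1) by (simp add: htilde_eq norm_mult abs_mult)
  also have "\<dots> \<le> lt * lam_a r * (\<Sum>j=1..r. coef rs j)"
    using assms(1,3) \<open>0 \<le> lam_a r\<close> by (intro mult_left_mono) auto
  finally show ?thesis
    using scale by simp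
qed

lemma norm_add_mult_cis_le:
  fixes a b e t :: real
  assumes "0 \<le> e" "e \<le> a + b" "e * (a + b) \<le> a * b * (1 - cos t)"
  shows "cmod (complex_of_real a + complex_of_real b * cis t) \<le> a + b - e"
proof -
  have "(cmod (complex_of_real a + complex_of_real b * cis t))\<^sup>2 = (a + b * cos t)\<^sup>2 + (b * sin t)\<^sup>2"
    by (simp add: cmod_power2)
  also have "\<dots> = (a + b)\<^sup>2 - 2 * (a * b * (1 - cos t))"
    using sin_cos_squared_add[of t] by algebra
  also have "\<dots> \<le> (a + b - e)\<^sup>2"
  proof -
    have "(a + b - e)\<^sup>2 = (a + b)\<^sup>2 - 2 * (e * (a + b)) + e\<^sup>2"
      by (simp add: power2_eq_square algebra_simps)
    then show ?thesis
      using assms(3) zero_le_power2[of e] by linarith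
  qed
  finally show ?thesis
    using assms(2) by (simp add: power2_le_iff_abs_le)
qed

lemma norm_sum_cis_le_two_terms:
  fixes c :: "nat \<Rightarrow> real"
  assumes "2 \<le> r"
  shows "cmod (\<Sum>j=1..r. complex_of_real (c j) * cis (real j * t)) + \<bar>c 1\<bar> + \<bar>c 2\<bar>
    \<le> cmod (complex_of_real (c 1) + complex_of_real (c 2) * cis t) + (\<Sum>j=1..r. \<bar>c j\<bar>)"
proof -
  define f where "f j = complex_of_real (c j) * cis (real j * t)" for j
  have split: "(\<Sum>j=1..r. g j) = g 1 + g 2 + (\<Sum>j=3..r. g j)" for g :: "nat \<Rightarrow> 'a::comm_monoid_add"
  proof -
    have "{1..r} = insert 1 (insert 2 {3..r})"
      using assms by auto
    then show ?thesis
      by (simp add: add.assoc)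
  qed
  have "f 2 = complex_of_real (c 2) * (cis t * cis t)"
    unfolding f_def using Complex.DeMoivre[of t 2] by (simp add: power2_eq_square)
  then have "f 1 + f 2 = cis t * (complex_of_real (c 1) + complex_of_real (c 2) * cis t)"
    by (simp add: f_def ring_distribs mult_ac)
  then have "cmod (f 1 + f 2) = cmod (complex_of_real (c 1) + complex_of_real (c 2) * cis t)"
    by (simp add: norm_mult)
  moreover have "cmod (\<Sum>j=3..r. f j) \<le> (\<Sum>j=3..r. \<bar>c j\<bar>)"
    using norm_sum[of f "{3..r}"] by (simp add: f_def norm_mult)
  moreover have "cmod (\<Sum>j=1..r. complex_of_real (c j) * cis (real j * t)) \<le> cmod (f 1 + f 2) + cmod (\<Sum>j=3..r. f j)"
    unfolding f_def[symmetric] split[of f] by (rule norm_triangle_ineq)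
  ultimately show ?thesis
    using split[of "\<lambda>j. \<bar>c j\<bar>"] by linarith
qed

lemma sum_abs_coef_le:
  assumes "1 \<le> rs" "rs \<le> r"
  shows "(\<Sum>j=1..r. \<bar>coef rs j\<bar>) \<le> (\<Sum>j=1..r. coef rs j) + 2 / real rs"
proof -
  define g where "g j = weight j / real j ^ 2" for j
  have "(\<Sum>j=1..r. \<bar>coef rs j\<bar>) = (\<Sum>j=1..rs. g j) + (\<Sum>j=rs+1..r. g j)"
    using assms sum.ub_add_nat[of 1 rs "\<lambda>j. \<bar>coef rs j\<bar>" "r - rs"] weight_pos
    by (simp add: coef_def g_def eps_def abs_mult less_imp_le)
  moreover have "(\<Sum>j=1..r. coef rs j) = (\<Sum>j=1..rs. g j) - (\<Sum>j=rs+1..r. g j)"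
    using sum_eps_mult[OF assms(2), of g] by (simp add: coef_def g_def)
  moreover have "(\<Sum>j=rs+1..r. g j) \<le> 1 / real rs"
    unfolding g_def using assms by (rule weight_tail_le)
  ultimately show ?thesis
    by simp
qed

lemma norm_coef_sum_le_away_from_zero:
  assumes "10^19 \<le> real rs" "rs \<le> r" "1/10^8 \<le> \<bar>t\<bar>" "\<bar>t\<bar> \<le> pi"
  shows "cmod (\<Sum>j=1..r. complex_of_real (coef rs j) * cis (real j * t)) \<le> (\<Sum>j=1..r. coef rs j)"
proof -
  define a b e where "a = coef rs 1" and "b = coef rs 2" and "e = 2 / real rs"
  have rs2: "2 \<le> rs"
    using assms(1) by simp
  have ab: "4/9 \<le> a" "a \<le> 9/16" "1/16 \<le> b" "b \<le> 9/64"
    using rs2 weight_1_ge weight_le[of 1] weight_2_ge weight_le[of 2]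
    by (auto simp: a_def b_def coef_def eps_def)
  have e: "0 \<le> e" "e \<le> 2 / 10^19"
    using assms(1) by (auto simp: e_def field_simps)
  have "1 - cos (1/10^8) \<le> 1 - cos t"
    using assms(3,4) cos_monotone_0_pi_le[of "1/10^8" "\<bar>t\<bar>"] by simp
  moreover have "(1 - (1/10^8)\<^sup>2 / 24)\<^sup>2 / 2 * (1/10^8)\<^sup>2 \<le> 1 - cos (1/10^8::real)"
    by (rule one_minus_cos_ge) auto
  ultimately have "1 / 10^17 \<le> 1 - cos t"
    by (simp add: power2_eq_square)
  then have "4/9 * (1/16) * (1 / 10^17) \<le> a * b * (1 - cos t)"
    using ab by (intro mult_mono) auto
  moreover have "e * (a + b) \<le> 2 / 10^19 * 1"
    using ab e by (intro mult_mono) auto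
  ultimately have "cmod (complex_of_real a + complex_of_real b * cis t) \<le> a + b - e"
    using ab e by (intro norm_add_mult_cis_le) auto
  moreover have "(\<Sum>j=1..r. \<bar>coef rs j\<bar>) \<le> (\<Sum>j=1..r. coef rs j) + e"
    unfolding e_def using rs2 assms(2) by (intro sum_abs_coef_le) auto
  moreover have "\<bar>a\<bar> = a" "\<bar>b\<bar> = b"
    using ab by auto
  ultimately show ?thesis
    using norm_sum_cis_le_two_terms[of r "coef rs" t] rs2 assms(2)
    by (simp add: a_def b_def)
qed

lemma coef_sum_one_plus_cos_ge:
  assumes "1000 \<le> rs" "rs \<le> r" "\<bar>t\<bar> \<le> 1/100"
  shows "22/25 \<le> (\<Sum>j=1..r. coef rs j * (1 + cos (real j * t)))"
proof -
  define g where "g j = weight j / real j ^ 2 * (1 + cos (real j * t))" for j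
  have g_nonneg: "0 \<le> g j" for j
  proof -
    have "0 \<le> 1 + cos (real j * t)"
      using cos_ge_minus_one[of "real j * t"] by linarith
    then show ?thesis
      unfolding g_def using weight_pos[of j] by (intro mult_nonneg_nonneg divide_nonneg_nonneg) auto
  qed
  have "t\<^sup>2 \<le> (1/100)\<^sup>2"
    using assms(3) by (simp add: power2_le_iff_abs_le)
  then have "4/9 * (2 - 1/20000) \<le> weight 1 * (2 - t\<^sup>2 / 2)"
    using weight_1_ge by (intro mult_mono) (auto simp: power_divide)
  also have "\<dots> \<le> g 1"
    using one_minus_cos_le[of t] weight_pos[of 1] by (simp add: g_def)
  also have "\<dots> \<le> (\<Sum>j=1..rs. g j)"
    using assms(1) g_nonneg by (intro member_le_sum) auto
  finally have head: "4/9 * (2 - 1/20000) \<le> (\<Sum>j=1..rs. g j)" .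
  have "g j \<le> 2 * (weight j / real j ^ 2)" for j
  proof -
    have "weight j / real j ^ 2 * (1 + cos (real j * t)) \<le> weight j / real j ^ 2 * 2"
      using weight_pos[of j] by (intro mult_left_mono) auto
    then show ?thesis
      by (simp add: g_def)
  qed
  then have "(\<Sum>j=rs+1..r. g j) \<le> 2 * (\<Sum>j=rs+1..r. weight j / real j ^ 2)"
    by (simp add: sum_distrib_left sum_mono)
  also have "\<dots> \<le> 2 * (1 / real rs)"
    using assms(1,2) weight_tail_le[of rs r] by simp
  also have "\<dots> \<le> 2 * (1 / 1000)"
    using assms(1) by (simp add: field_simps)
  finally have tail: "(\<Sum>j=rs+1..r. g j) \<le> 2 * (1 / 1000)" .
  have "22/25 \<le> 4/9 * (2 - 1/20000) - 2 * (1 / 1000::real)"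
    by simp
  also have "\<dots> \<le> (\<Sum>j=1..rs. g j) - (\<Sum>j=rs+1..r. g j)"
    using head tail by (rule diff_mono)
  also have "\<dots> = (\<Sum>j=1..r. coef rs j * (1 + cos (real j * t)))"
    using sum_eps_mult[OF assms(2), of g] by (simp add: coef_def g_def mult_ac)
  finally show ?thesis .
qed

lemma coef_sin_sum_le:
  "\<bar>\<Sum>j=1..r. coef rs j * sin (real j * t)\<bar> \<le> 39/16 * \<bar>t\<bar>"
proof -
  have "\<bar>\<Sum>j=1..r. coef rs j * sin (real j * t)\<bar> \<le> (\<Sum>j=1..r. \<bar>coef rs j * sin (real j * t)\<bar>)"
    by (rule sum_abs)
  also have "\<dots> \<le> (\<Sum>j=1..r. weight j / real j * \<bar>t\<bar>)"
  proof (intro sum_mono)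
    fix j
    assume "j \<in> {1..r}"
    have "\<bar>coef rs j * sin (real j * t)\<bar> = weight j / real j ^ 2 * \<bar>sin (real j * t)\<bar>"
      using weight_pos[of j] by (simp add: coef_def eps_def abs_mult)
    also have "\<dots> \<le> weight j / real j ^ 2 * (real j * \<bar>t\<bar>)"
      using abs_sin_x_le_abs_x[of "real j * t"] weight_pos[of j]
      by (intro mult_left_mono) (auto simp: abs_mult)
    also have "\<dots> = weight j / real j * \<bar>t\<bar>"
      using \<open>j \<in> {1..r}\<close> by (simp add: power2_eq_square)
    finally show "\<bar>coef rs j * sin (real j * t)\<bar> \<le> weight j / real j * \<bar>t\<bar>" .
  qed
  also have "\<dots> = (\<Sum>j=1..r. weight j / real j) * \<bar>t\<bar>"
    by (simp add: sum_distrib_right)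
  also have "\<dots> \<le> 39/16 * \<bar>t\<bar>"
    using weight_div_sum_le[of r] by (intro mult_right_mono) auto
  finally show ?thesis .
qed

lemma norm_le_of_re_im_bounds:
  fixes z :: complex and S t :: real
  assumes "7 * t\<^sup>2 \<le> S - Re z" "22/25 \<le> S + Re z" "\<bar>Im z\<bar> \<le> 39/16 * \<bar>t\<bar>"
  shows "cmod z \<le> S"
proof -
  have "(Im z)\<^sup>2 \<le> (39/16 * \<bar>t\<bar>)\<^sup>2"
    using assms(3) by (simp add: power2_le_iff_abs_le)
  also have "\<dots> \<le> 7 * t\<^sup>2 * (22/25)"
    by (simp add: power2_eq_square)
  also have "\<dots> \<le> (S - Re z) * (S + Re z)"
  proof -
    have "0 \<le> S - Re z"
      using assms(1) zero_le_power2[of t] by linarith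
    then show ?thesis
      using assms by (intro mult_mono) auto
  qed
  finally have "(Im z)\<^sup>2 \<le> (S - Re z) * (S + Re z)" .
  moreover have "(S - Re z) * (S + Re z) = S\<^sup>2 - (Re z)\<^sup>2"
    by (simp add: power2_eq_square algebra_simps)
  ultimately have "(cmod z)\<^sup>2 \<le> S\<^sup>2"
    using cmod_power2[of z] by linarith
  moreover have "0 \<le> S"
    using assms(1,2) zero_le_power2[of t] by linarith
  ultimately show ?thesis
    by (simp add: power2_le_iff_abs_le)
qed

lemma norm_coef_sum_le_near_zero:
  assumes "10^19 \<le> real rs" "rs \<le> r" "r \<le> 3 * rs" "20 \<le> balance r rs"
    and "10^6 \<le> real rs * weight rs" "\<bar>t\<bar> \<le> 1/10^8"
  shows "cmod (\<Sum>j=1..r. complex_of_real (coef rs j) * cis (real j * t)) \<le> (\<Sum>j=1..r. coef rs j)"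
proof (rule norm_le_of_re_im_bounds)
  have "7 * t\<^sup>2 \<le> (\<Sum>j=1..r. eps rs j * weight j * cos_gap t j)"
  proof (cases "real (Suc r) * \<bar>t\<bar> \<le> 2 * pi")
    case True
    then show ?thesis
      using assms by (intro eps_weight_cos_gap_ge_within_period) auto
  next
    case False
    then show ?thesis
      using assms by (intro eps_weight_cos_gap_ge_beyond_period) auto
  qed
  moreover have "(\<Sum>j=1..r. coef rs j) - Re (\<Sum>j=1..r. complex_of_real (coef rs j) * cis (real j * t))
      = (\<Sum>j=1..r. coef rs j * (1 - cos (real j * t)))"
    by (simp add: Re_sum right_diff_distrib sum_subtractf)
  ultimately show "7 * t\<^sup>2 \<le> (\<Sum>j=1..r. coef rs j) - Re (\<Sum>j=1..r. complex_of_real (coef rs j) * cis (real j * t))"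
    by (simp only: sum_coef_one_minus_cos)
  have "22/25 \<le> (\<Sum>j=1..r. coef rs j * (1 + cos (real j * t)))"
    using assms by (intro coef_sum_one_plus_cos_ge) auto
  moreover have "(\<Sum>j=1..r. coef rs j) + Re (\<Sum>j=1..r. complex_of_real (coef rs j) * cis (real j * t))
      = (\<Sum>j=1..r. coef rs j * (1 + cos (real j * t)))"
    by (simp add: Re_sum distrib_left sum.distrib)
  ultimately show "22/25 \<le> (\<Sum>j=1..r. coef rs j) + Re (\<Sum>j=1..r. complex_of_real (coef rs j) * cis (real j * t))"
    by simp
  show "\<bar>Im (\<Sum>j=1..r. complex_of_real (coef rs j) * cis (real j * t))\<bar> \<le> 39/16 * \<bar>t\<bar>"
    using coef_sin_sum_le[where r=r and rs=rs and t=t] by (simp add: Im_sum)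
qed

lemma norm_coef_sum_le:
  assumes "10^19 \<le> real rs" "rs \<le> r" "r \<le> 3 * rs" "20 \<le> balance r rs"
    and "10^6 \<le> real rs * weight rs" "\<bar>t\<bar> \<le> pi"
  shows "cmod (\<Sum>j=1..r. complex_of_real (coef rs j) * cis (real j * t)) \<le> (\<Sum>j=1..r. coef rs j)"
proof (cases "\<bar>t\<bar> \<le> 1/10^8")
  case True
  then show ?thesis
    using assms by (intro norm_coef_sum_le_near_zero) auto
next
  case False
  then show ?thesis
    using assms by (intro norm_coef_sum_le_away_from_zero) auto
qed

section \<open>Large n\<close>

lemma weight_prefix_sum_le: "(\<Sum>j=1..n. weight j) \<le> real A + real n * weight (A + 1)"
proof -
  have "(\<Sum>j=1..n. weight j) \<le> (\<Sum>j=1..n. (if j \<le> A then 1 else 0) + weight (A + 1))"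
  proof (intro sum_mono)
    fix j
    assume "j \<in> {1..n}"
    then show "weight j \<le> (if j \<le> A then 1 else 0) + weight (A + 1)"
      using weight_le[of j] weight_pos[of "A + 1"] weight_antimono[of "A + 1" j] by auto
  qed
  also have "\<dots> = real (card {j \<in> {1..n}. j \<le> A}) + real n * weight (A + 1)"
    by (simp add: sum.distrib sum.inter_filter[symmetric])
  also have "card {j \<in> {1..n}. j \<le> A} \<le> card {1..A}"
    by (intro card_mono) auto
  finally show ?thesis
    by simp
qed

text \<open>
  Split the first rs weights at A ~ r^(4/5): beyond A each weight is at most (25/16) / ln^2 r, so
  rs < r/3 of them weigh about (25/48) r / ln^2 r, less than the (2/3) r / ln^2 r carried by the
  r - rs negative terms.
\<close>

lemma balance_neg_of_three_times_lt:
  assumes "3 * rs < r" "2 \<le> r"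
    and "real r powr (4/5) + 1 + (real r / 3) / ((4/5) * ln (real r))\<^sup>2
      < (2 * real r / 3) / ln (real r + 3) ^ 2"
  shows "balance r rs < 0"
proof -
  define x where "x = real r"
  define A where "A = nat \<lceil>x powr (4/5)\<rceil>"
  have x2: "2 \<le> x"
    using assms(2) by (simp add: x_def)
  have A: "x powr (4/5) \<le> real A" "real A \<le> x powr (4/5) + 1"
    by (auto simp: A_def of_nat_nat)
  have "(4/5) * ln x = ln (x powr (4/5))"
    using x2 by (simp add: ln_powr)
  also have "\<dots> \<le> ln (real (A + 1) + 3)"
    using A x2 by (subst ln_le_cancel_iff) auto
  finally have "weight (A + 1) \<le> 1 / ((4/5) * ln x)\<^sup>2"
    unfolding weight_def using x2 by (intro divide_left_mono power_mono mult_pos_pos) auto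
  then have "real rs * weight (A + 1) \<le> (x / 3) * (1 / ((4/5) * ln x)\<^sup>2)"
    using assms(1) less_imp_le[OF weight_pos] by (intro mult_mono) (auto simp: x_def)
  then have "(\<Sum>j=1..rs. weight j) \<le> x powr (4/5) + 1 + (x / 3) / ((4/5) * ln x)\<^sup>2"
    using weight_prefix_sum_le[of rs A] A by simp
  moreover have "(2 * x / 3) / ln (x + 3) ^ 2 \<le> (\<Sum>j=rs+1..r. weight j)"
  proof -
    have "2 * x / 3 * weight r \<le> real (r - rs) * weight r"
      using assms(1) weight_pos[of r] by (intro mult_right_mono) (auto simp: x_def of_nat_diff)
    also have "\<dots> = (\<Sum>j=rs+1..r. weight r)"
      by simp
    also have "\<dots> \<le> (\<Sum>j=rs+1..r. weight j)"
      by (intro sum_mono weight_antimono) auto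
    finally show ?thesis
      by (simp add: weight_def x_def)
  qed
  ultimately show ?thesis
    using assms(3) unfolding balance_eq_weight x_def by linarith
qed

lemma eventually_balance_pos_imp_le_three_times:
  "\<forall>\<^sub>F r in sequentially. \<forall>rs. 0 < balance r rs \<longrightarrow> r \<le> 3 * rs"
proof -
  define f g :: "real \<Rightarrow> real"
    where "f x = x powr (4/5) + 1 + (x / 3) / ((4/5) * ln x)\<^sup>2"
      and "g x = (2 * x / 3) / ln (x + 3) ^ 2" for x
  have "((\<lambda>x. f x / g x) \<longlongrightarrow> 25/32) at_top"
    unfolding f_def g_def by (real_asymp, simp add: inverse_eq_divide power2_eq_square)
  then have "\<forall>\<^sub>F x in at_top. f x / g x < 1"
    by (rule order_tendstoD) simp
  moreover have "\<forall>\<^sub>F x in at_top. 0 < g x"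
    unfolding g_def by real_asymp
  ultimately have "\<forall>\<^sub>F x in at_top. f x < g x"
    by eventually_elim (simp add: divide_less_eq_1_pos)
  then have "\<forall>\<^sub>F r in sequentially. f (real r) < g (real r)"
    using filterlim_real_sequentially by (rule eventually_compose_filterlim)
  moreover have "\<forall>\<^sub>F r in sequentially. 2 \<le> r"
    by (rule eventually_ge_at_top)
  ultimately show ?thesis
  proof eventually_elim
    case (elim r)
    show ?case
    proof (intro allI impI)
      fix rs
      assume "0 < balance r rs"
      show "r \<le> 3 * rs"
      proof (rule ccontr)
        assume "\<not> r \<le> 3 * rs"
        then have "balance r rs < 0"
          using elim by (intro balance_neg_of_three_times_lt) (auto simp: f_def g_def)
        with \<open>0 < balance r rs\<close> show False
          by simp
      qed
    qed
  qed
qed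

lemma eventually_large_index:
  "\<forall>\<^sub>F rs in sequentially. 10^19 \<le> real rs \<and> 10^6 \<le> real rs * weight rs"
proof -
  have "\<forall>\<^sub>F rs in sequentially. 10^19 \<le> real rs"
    by real_asymp
  moreover have "\<forall>\<^sub>F rs in sequentially. 10^6 \<le> real rs / ln (real rs + 3) ^ 2"
    by real_asymp
  ultimately show ?thesis
    by eventually_elim (simp add: weight_def)
qed

lemma filterlim_r_of: "filterlim r_of sequentially sequentially"
proof -
  have "filterlim (\<lambda>n. a_of n powr (-1/2)) at_top sequentially"
    unfolding a_of_def by real_asymp
  then show ?thesis
    unfolding r_of_def
    by (intro filterlim_compose[OF filterlim_nat_sequentially] filterlim_compose[OF filterlim_floor_sequentially])
qed

lemma eventually_norm_coef_sum_le:
  "\<forall>\<^sub>F r in sequentially. \<forall>rs t. rs \<le> r \<and> 20 \<le> balance r rs \<and> \<bar>t\<bar> \<le> pi \<longrightarrow>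
    cmod (\<Sum>j=1..r. complex_of_real (coef rs j) * cis (real j * t)) \<le> (\<Sum>j=1..r. coef rs j)"
proof -
  obtain M where M: "\<And>rs. M \<le> rs \<Longrightarrow> 10^19 \<le> real rs \<and> 10^6 \<le> real rs * weight rs"
    using eventually_large_index by (auto simp: eventually_sequentially)
  have "\<forall>\<^sub>F r in sequentially. 3 * M \<le> r"
    by (rule eventually_ge_at_top)
  with eventually_balance_pos_imp_le_three_times show ?thesis
  proof eventually_elim
    case (elim r)
    show ?case
    proof (intro allI impI)
      fix rs t
      assume H: "rs \<le> r \<and> 20 \<le> balance r rs \<and> \<bar>t\<bar> \<le> pi"
      then have "r \<le> 3 * rs"
        using elim by auto
      then have "M \<le> rs"
        using elim by linarith
      then show "cmod (\<Sum>j=1..r. complex_of_real (coef rs j) * cis (real j * t)) \<le> (\<Sum>j=1..r. coef rs j)"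
        using M[of rs] H \<open>r \<le> 3 * rs\<close> by (intro norm_coef_sum_le) auto
    qed
  qed
qed

theorem lemma6:
  shows "\<forall>\<^sub>F n in sequentially.
    \<forall>rs lt. rs \<in> {1..r_of n} \<and> balance (r_of n) rs \<in> {20..21}
       \<and> lt > 0 \<and> htilde lt rs (r_of n) 1 = 1 \<longrightarrow>
       (\<forall>t\<in>{-pi..pi}. cmod (htilde lt rs (r_of n) (exp (\<i> * complex_of_real t))) \<le> 1)"
  using eventually_compose_filterlim[OF eventually_norm_coef_sum_le filterlim_r_of]
proof eventually_elim
  case (elim n)
  show ?case
  proof (intro allI impI ballI)
    fix rs lt t
    assume H: "rs \<in> {1..r_of n} \<and> balance (r_of n) rs \<in> {20..21} \<and> lt > 0 \<and> htilde lt rs (r_of n) 1 = 1"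
      and "t \<in> {-pi..pi}"
    have "exp (\<i> * complex_of_real t) ^ j = cis (real j * t)" for j
      by (simp only: cis_conv_exp[symmetric] Complex.DeMoivre)
    moreover have "cmod (\<Sum>j=1..r_of n. complex_of_real (coef rs j) * cis (real j * t))
        \<le> (\<Sum>j=1..r_of n. coef rs j)"
      using elim H \<open>t \<in> {-pi..pi}\<close> by auto
    ultimately show "cmod (htilde lt rs (r_of n) (exp (\<i> * complex_of_real t))) \<le> 1"
      using H by (intro norm_htilde_le_one) auto
  qed
qed

end
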